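(* Let $\varepsilon>0$ be sufficiently small, $n$ a positive integer, $v$ a binary string, and $r_1>r_2>\dots>r_k$ positive integers with $r_j\ge r_{j+1}/\varepsilon^4$ for all $j$, such that $l_j=\varepsilon^2r_j$ are integers, $l_1\mid |v|$, $l_{j+1}\mid l_j$, and $\mathrm{adv}(v,A_{r_j,n})\ge\varepsilon/2$ for every $j=1,\dots,k$. Let $v_0=v$ and for $j=1,\dots,k$ let $v_j$ be chosen uniformly at random among the consecutive non-overlapping length-$l_j$ substrings into which $v_{j-1}$ is split, and let $B_j=\mathrm{bias}(v_j)$. Then $\mathrm{Var}(B_{i+1})\ge\mathrm{Var}(B_i)+\frac{\varepsilon^3}{1200}$ for all $1\le i<k$.
   Context: For a binary string $w$, $\mathrm{bias}(w)=\frac{\mathrm{count}_1(w)-\mathrm{count}_0(w)}{|w|}$, where $\mathrm{count}_a(w)$ is the number of occurrences of symbol $a$ in $w$. A matching $M$ between strings $a,b$ is a pair of increasing index sequences in $a$ and $b$ of equal length $|M|$ matching equal symbols; $\mathrm{adv}_M(a,b)=\frac{3|M|-|a|-|b|}{|a|}$ and $\mathrm{adv}(a,b)=\max_M\mathrm{adv}_M(a,b)$. $A_{r,n}$ is the length-$n$ prefix of $(0^r1^r)^\infty$. *)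

theory Defs
  imports "HOL-Probability.Probability"
begin

text \<open>Binary strings are bool lists; True encodes symbol 1, False encodes symbol 0.\<close>

definition count1 :: "bool list \<Rightarrow> nat" where
  "count1 w = length (filter (\<lambda>x. x) w)"

definition count0 :: "bool list \<Rightarrow> nat" where
  "count0 w = length (filter (\<lambda>x. \<not> x) w)"

definition bias :: "bool list \<Rightarrow> real" where
  "bias w = (real (count1 w) - real (count0 w)) / real (length w)"

definition matchings :: "bool list \<Rightarrow> bool list \<Rightarrow> (nat \<times> nat) list set" where
  "matchings a b = {M. sorted_wrt (\<lambda>p q. fst p < fst q \<and> snd p < snd q) M \<and>
      (\<forall>(i, j) \<in> set M. i < length a \<and> j < length b \<and> a ! i = b ! j)}"

definition adv_M :: "(nat \<times> nat) list \<Rightarrow> bool list \<Rightarrow> bool list \<Rightarrow> real" where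
  "adv_M M a b = (3 * real (length M) - real (length a) - real (length b)) / real (length a)"

definition adv :: "bool list \<Rightarrow> bool list \<Rightarrow> real" where
  "adv a b = Max ((\<lambda>M. adv_M M a b) ` matchings a b)"

text \<open>A r n: the length-n prefix of (0^r 1^r)^\<infinity>.\<close>

definition A :: "nat \<Rightarrow> nat \<Rightarrow> bool list" where
  "A r n = map (\<lambda>i. odd (i div r)) [0..<n]"

definition split_unif :: "nat \<Rightarrow> bool list \<Rightarrow> bool list pmf" where
  "split_unif l w = map_pmf (\<lambda>t. take l (drop (t * l) w)) (pmf_of_set {..<length w div l})"

primrec vdist :: "(nat \<Rightarrow> nat) \<Rightarrow> bool list \<Rightarrow> nat \<Rightarrow> bool list pmf" where
  "vdist l v 0 = return_pmf v"
| "vdist l v (Suc j) = bind_pmf (vdist l v j) (split_unif (l (Suc j)))"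

end

theory Submission
  imports Defs
begin

text \<open>For \<open>1 \<le> j \<le> k\<close> the string \<open>v\<^sub>j\<close> is a uniformly random block of length \<open>l\<^sub>j\<close> of \<open>v\<close>.
  By the law of total variance, \<open>Var(B\<^sub>i\<^sub>+\<^sub>1) - Var(B\<^sub>i)\<close> is the mean square of the difference
  between the bias of a fine block (length \<open>l\<^sub>i\<^sub>+\<^sub>1\<close>) and that of the coarse block (length
  \<open>l\<^sub>i\<close>) containing it; by Cauchy-Schwarz it suffices that the numbers of ones in the fine
  blocks deviate in total by \<open>\<epsilon>|v|/8\<close> from the shares predicted by their coarse blocks.

  This comes from a matching \<open>M\<close> of advantage \<open>\<ge> \<epsilon>/2\<close> between \<open>v\<close> and \<open>A\<^sub>r\<^sub>,\<^sub>n\<close>, \<open>r = r\<^sub>i\<^sub>+\<^sub>1\<close>.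
  Consider a period \<open>0\<^sup>r1\<^sup>r\<close> of \<open>A\<^sub>r\<^sub>,\<^sub>n\<close> whose partners in \<open>v\<close> lie in one coarse block, with a
  fraction \<open>a\<close> of zeros. If the fine blocks had that same density, the matched zeros and ones
  would need stretches of lengths at least \<open>u\<^sub>0/a\<close> and \<open>u\<^sub>1/(1 - a)\<close>, and since
  \<open>1/a + 1/(1 - a) \<ge> 4\<close> the period would contribute no advantage. Only \<open>|v|/l\<^sub>i \<le> \<epsilon>\<^sup>2|v|/r\<close>
  periods straddle two coarse blocks, and rounding stretches to fine blocks costs \<open>O(l\<^sub>i\<^sub>+\<^sub>1) =
  O(\<epsilon>\<^sup>2 r)\<close> per period, so most of the advantage \<open>\<epsilon>|v|/2\<close> must be paid for by the deviations.\<close>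

section \<open>Blocks of a string\<close>

definition block :: "nat \<Rightarrow> bool list \<Rightarrow> nat \<Rightarrow> bool list" where
  "block m w t = take m (drop (t * m) w)"

definition count_in :: "bool list \<Rightarrow> bool \<Rightarrow> nat set \<Rightarrow> nat" where
  "count_in w b S = card {i \<in> S. w ! i = b}"

lemma length_block: "(t + 1) * m \<le> length w \<Longrightarrow> length (block m w t) = m"
  unfolding block_def by simp

lemma block_block:
  assumes "u < q"
  shows "block m (block (q * m) w t) u = block m w (t * q + u)"
proof -
  have "u * m + m \<le> q * m"
    using assms by (metis Suc_leI add.commute mult_Suc mult_le_mono1)
  then show ?thesis
    unfolding block_def by (simp add: take_drop min_def algebra_simps)
qed

lemma split_unif_eq_block: "split_unif m w = map_pmf (block m w) (pmf_of_set {..<length w div m})"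
  unfolding split_unif_def block_def[abs_def] ..

lemma count_in_eq_sum: "finite S \<Longrightarrow> real (count_in w b S) = (\<Sum>i\<in>S. of_bool (w ! i = b))"
  unfolding count_in_def by (simp add: sum.If_cases Int_def conj_commute)

lemma count_in_le: "a \<le> c \<Longrightarrow> real (count_in w b {a..<c}) \<le> real c - real a"
proof -
  assume "a \<le> c"
  have "count_in w b {a..<c} \<le> card {a..<c}"
    unfolding count_in_def by (rule card_mono) auto
  with \<open>a \<le> c\<close> show ?thesis by simp
qed

lemma count_in_split:
  "x \<le> y \<Longrightarrow> y \<le> z \<Longrightarrow> real (count_in w b {x..<z}) = real (count_in w b {x..<y}) + real (count_in w b {y..<z})"
  unfolding count_in_eq_sum[OF finite_atLeastLessThan] by (rule sum.atLeastLessThan_concat[symmetric])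

lemma count_in_compl: "finite S \<Longrightarrow> count_in w False S + count_in w True S = card S"
  unfolding count_in_def by (subst card_Un_disjoint[symmetric]) (auto intro!: arg_cong[where f = card])

lemma count1_block:
  assumes "(t + 1) * m \<le> length w"
  shows "count1 (block m w t) = count_in w True {t * m..<t * m + m}"
proof -
  have "{i. i < m \<and> block m w t ! i} = (\<lambda>i. i - t * m) ` {i \<in> {t * m..<t * m + m}. w ! i = True}"
    using assms unfolding block_def
    by (auto simp: image_iff algebra_simps) (metis add.commute diff_add_inverse le_add1 nat_add_left_cancel_less)
  moreover have "inj_on (\<lambda>i. i - t * m) {i \<in> {t * m..<t * m + m}. w ! i = True}"
    by (auto intro!: inj_onI)
  ultimately show ?thesis
    using length_block[OF assms]
    unfolding count1_def count_in_def by (simp add: length_filter_conv_card card_image)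
qed

lemma bias_block:
  assumes "(t + 1) * m \<le> length w" "0 < m"
  shows "bias (block m w t) = (2 * real (count_in w True {t * m..<t * m + m}) - m) / m"
proof -
  have "count0 (block m w t) + count1 (block m w t) = m"
    using length_block[OF assms(1)] sum_length_filter_compl[of "\<lambda>x. x" "block m w t"]
    unfolding count0_def count1_def by simp
  then show ?thesis
    using length_block[OF assms(1)] count1_block[OF assms(1)] unfolding bias_def
    by (simp add: of_nat_diff)
qed

lemma sum_atLeastLessThan_group:
  fixes g :: "nat \<Rightarrow> real"
  assumes "a \<le> b"
  shows "(\<Sum>i\<in>{a * m..<b * m}. g i) = (\<Sum>t\<in>{a..<b}. \<Sum>i\<in>{t * m..<t * m + m}. g i)"
  using assms
proof (induction b)
  case (Suc b)
  show ?case
  proof (cases "a = Suc b")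
    case False
    then have "a \<le> b" using Suc.prems by simp
    then have "(\<Sum>i\<in>{a * m..<Suc b * m}. g i) = (\<Sum>i\<in>{a * m..<b * m}. g i) + (\<Sum>i\<in>{b * m..<b * m + m}. g i)"
      by (simp add: add.commute sum.atLeastLessThan_concat[symmetric] mult_le_mono1)
    with Suc.IH \<open>a \<le> b\<close> show ?thesis by simp
  qed simp
qed simp

lemma bias_block_mult:
  assumes "0 < m" "0 < q" "(s + 1) * (q * m) \<le> length w"
  shows "bias (block (q * m) w s) = (\<Sum>u<q. bias (block m w (s * q + u))) / q"
proof -
  let ?c = "\<lambda>t. real (count_in w True {t * m..<t * m + m})"
  have fine: "bias (block m w (s * q + u)) = (2 * ?c (s * q + u) - m) / m" if "u < q" for u
  proof (rule bias_block[OF _ assms(1)])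
    have "(s * q + u + 1) * m \<le> (s * q + q) * m" using that by (intro mult_le_mono1) simp
    with assms(3) show "(s * q + u + 1) * m \<le> length w" by (simp add: algebra_simps)
  qed
  have "real (count_in w True {s * (q * m)..<s * (q * m) + q * m})
      = (\<Sum>i\<in>{(s * q) * m..<(s * q + q) * m}. of_bool (w ! i = True))"
    by (simp add: count_in_eq_sum algebra_simps)
  also have "\<dots> = (\<Sum>t\<in>{s * q..<s * q + q}. \<Sum>i\<in>{t * m..<t * m + m}. of_bool (w ! i = True))"
    by (rule sum_atLeastLessThan_group) simp
  also have "\<dots> = (\<Sum>t\<in>{s * q..<s * q + q}. ?c t)"
    by (simp only: count_in_eq_sum finite_atLeastLessThan)
  also have "\<dots> = (\<Sum>u<q. ?c (s * q + u))"
    using sum.shift_bounds_nat_ivl[of ?c 0 "s * q" q] by (simp add: atLeast0LessThan add.commute)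
  finally have coarse: "real (count_in w True {s * (q * m)..<s * (q * m) + q * m}) = (\<Sum>u<q. ?c (s * q + u))" .
  have "(\<Sum>u<q. bias (block m w (s * q + u))) = (\<Sum>u<q. (2 * ?c (s * q + u) - m) / m)"
    by (rule sum.cong) (simp_all add: fine)
  also have "\<dots> = (2 * (\<Sum>u<q. ?c (s * q + u)) - q * m) / m"
    by (simp add: sum_divide_distrib[symmetric] sum_subtractf sum_distrib_left)
  finally have "(\<Sum>u<q. bias (block m w (s * q + u))) / q = (2 * (\<Sum>u<q. ?c (s * q + u)) - q * m) / (q * m)"
    by (simp add: divide_divide_eq_left mult.commute)
  moreover have "bias (block (q * m) w s) = (2 * (\<Sum>u<q. ?c (s * q + u)) - q * m) / (q * m)"
    using bias_block[of s "q * m" w] assms coarse by simp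
  ultimately show ?thesis by simp
qed

section \<open>Uniformly random blocks\<close>

lemma bind_pmf_of_set_lessThan_mult:
  fixes q T :: nat
  assumes "0 < q" "0 < T"
  shows "bind_pmf (pmf_of_set {..<T}) (\<lambda>t. map_pmf (\<lambda>u. f (t * q + u)) (pmf_of_set {..<q}))
         = map_pmf f (pmf_of_set {..<T * q})"
proof -
  have shift: "map_pmf (\<lambda>u. t * q + u) (pmf_of_set {..<q}) = pmf_of_set {t * q..<t * q + q}" for t
  proof -
    have "(\<lambda>u. t * q + u) ` {..<q} = {t * q..<t * q + q}"
      by (simp add: lessThan_atLeast0 add.commute)
    then show ?thesis using assms by (metis map_pmf_of_set_inj finite_lessThan inj_on_add lessThan_empty_iff less_not_refl)
  qed
  have disj: "disjoint_family_on (\<lambda>t. {t * q..<t * q + q}) {..<T}"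
    unfolding disjoint_family_on_def
  proof (intro ballI impI)
    fix a b :: nat assume "a \<noteq> b"
    then have "a * q + q \<le> b * q \<or> b * q + q \<le> a * q"
      by (metis Suc_leI add.commute mult_Suc mult_le_mono1 nat_neq_iff)
    then show "{a * q..<a * q + q} \<inter> {b * q..<b * q + q} = {}" by auto
  qed
  have "{..<T * q} = (\<Union>t\<in>{..<T}. {t * q..<t * q + q})"
  proof (rule set_eqI, rule iffI)
    fix x assume "x \<in> {..<T * q}"
    then have "x div q < T" "x div q * q \<le> x" "x < x div q * q + q"
      using assms by (auto simp: less_mult_imp_div_less)
        (metis add.commute div_mult_mod_eq mod_less_divisor mult.commute nat_add_left_cancel_less)
    then show "x \<in> (\<Union>t\<in>{..<T}. {t * q..<t * q + q})" by (auto intro!: bexI[of _ "x div q"])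
  next
    fix x assume "x \<in> (\<Union>t\<in>{..<T}. {t * q..<t * q + q})"
    then obtain t where "t < T" "x < t * q + q" by auto
    then show "x \<in> {..<T * q}" by (metis Suc_leI add.commute mult_Suc mult_le_mono1 lessThan_iff order_less_le_trans)
  qed
  then have "pmf_of_set {..<T * q} = bind_pmf (pmf_of_set {..<T}) (\<lambda>t. pmf_of_set {t * q..<t * q + q})"
    using assms disj by (auto intro: pmf_of_set_UN)
  then show ?thesis
    by (simp add: map_bind_pmf shift[symmetric] pmf.map_comp o_def)
qed

lemma split_unif_block:
  assumes "0 < m" "0 < q" "(t + 1) * (q * m) \<le> length w"
  shows "split_unif m (block (q * m) w t) = map_pmf (\<lambda>u. block m w (t * q + u)) (pmf_of_set {..<q})"
proof -
  have "set_pmf (pmf_of_set {..<q}) = {..<q}"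
    using assms(2) by (intro set_pmf_of_set) auto
  then show ?thesis
    unfolding split_unif_eq_block length_block[OF assms(3)] using assms(1)
    by (intro map_pmf_cong) (simp_all add: block_block)
qed

lemma vdist_dvd_length:
  assumes "l 1 dvd length v" "\<forall>j\<in>{1..<k}. l (Suc j) dvd l j" "1 \<le> j" "j \<le> k"
  shows "l j dvd length v"
  using assms(3,4)
proof (induction j)
  case (Suc j)
  then show ?case
    using assms(1,2) by (cases "j = 0") (auto intro: dvd_trans)
qed simp

lemma vdist_uniform_block:
  assumes pos: "\<forall>j\<in>{1..k}. 0 < l j" and dvd1: "l 1 dvd length v"
    and dvd: "\<forall>j\<in>{1..<k}. l (Suc j) dvd l j" and "1 \<le> j" "j \<le> k" and "0 < length v"
  shows "vdist l v j = map_pmf (block (l j) v) (pmf_of_set {..<length v div l j})"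
  using assms(4,5)
proof (induction j)
  case (Suc j)
  show ?case
  proof (cases "j = 0")
    case True
    then show ?thesis by (simp add: split_unif_eq_block bind_return_pmf)
  next
    case False
    define m where "m = l (Suc j)"
    define q where "q = l j div m"
    define T where "T = length v div l j"
    have "0 < m" "0 < l j" using pos Suc.prems False by (auto simp: m_def)
    have Lq: "l j = q * m"
      using dvd Suc.prems False by (simp add: q_def m_def)
    have NT: "length v = T * l j"
      using vdist_dvd_length[OF dvd1 dvd, of j] Suc.prems False by (simp add: T_def)
    have "0 < q" "0 < T"
      using Lq NT \<open>0 < l j\<close> \<open>0 < length v\<close> by (auto intro: gr0I)
    have "vdist l v (Suc j) = bind_pmf (pmf_of_set {..<T}) (\<lambda>t. split_unif m (block (l j) v t))"
      using Suc False by (simp add: m_def T_def bind_map_pmf)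
    also have "\<dots> = bind_pmf (pmf_of_set {..<T}) (\<lambda>t. map_pmf (\<lambda>u. block m v (t * q + u)) (pmf_of_set {..<q}))"
    proof (rule bind_pmf_cong[OF refl])
      fix t assume "t \<in> set_pmf (pmf_of_set {..<T})"
      then have "t < T"
        using \<open>0 < T\<close> by (subst (asm) set_pmf_of_set) auto
      then have "(t + 1) * (q * m) \<le> length v"
        using NT Lq by (metis Suc_eq_plus1 Suc_leI mult_le_mono1)
      then show "split_unif m (block (l j) v t) = map_pmf (\<lambda>u. block m v (t * q + u)) (pmf_of_set {..<q})"
        unfolding Lq by (rule split_unif_block[OF \<open>0 < m\<close> \<open>0 < q\<close>])
    qed
    also have "\<dots> = map_pmf (block m v) (pmf_of_set {..<T * q})"
      using \<open>0 < q\<close> \<open>0 < T\<close> by (rule bind_pmf_of_set_lessThan_mult)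
    also have "T * q = length v div m"
      using NT Lq \<open>0 < m\<close> by simp
    finally show ?thesis by (simp add: m_def)
  qed
qed simp

lemma variance_map_pmf_of_set:
  fixes X :: "'b \<Rightarrow> real"
  assumes "finite S" "S \<noteq> {}"
  shows "measure_pmf.variance (map_pmf f (pmf_of_set S)) X
     = (\<Sum>a\<in>S. (X (f a) - (\<Sum>a\<in>S. X (f a)) / card S)\<^sup>2) / card S"
  using assms by (simp add: integral_pmf_of_set)

lemma sum_lessThan_mult_group:
  fixes g :: "nat \<Rightarrow> 'a::comm_monoid_add"
  shows "(\<Sum>t<T * q. g t) = (\<Sum>s<T. \<Sum>u<q. g (s * q + u))"
  unfolding sum.nat_group[symmetric]
  by (simp add: sum.shift_bounds_nat_ivl[of g 0 _ q, simplified] add.commute atLeast0LessThan)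

text \<open>The law of total variance for a uniform index \<open>t < T * q\<close>, conditioned on \<open>t div q\<close>.\<close>

lemma mean_sq_dev_group:
  fixes \<beta> :: "nat \<Rightarrow> real"
  assumes "0 < T" "0 < q"
  defines "\<mu> \<equiv> \<lambda>s. (\<Sum>u<q. \<beta> (s * q + u)) / q"
  shows "(\<Sum>t<T * q. (\<beta> t - (\<Sum>t<T * q. \<beta> t) / (T * q))\<^sup>2) / (T * q)
      = (\<Sum>s<T. (\<mu> s - (\<Sum>s<T. \<mu> s) / T)\<^sup>2) / T + (\<Sum>t<T * q. (\<beta> t - \<mu> (t div q))\<^sup>2) / (T * q)"
proof -
  have qn: "real q \<noteq> 0" "real T \<noteq> 0" using assms by auto
  define a where "a = (\<Sum>s<T. \<mu> s) / T"
  have mean: "(\<Sum>t<T * q. \<beta> t) / (T * q) = a"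
    using qn by (simp add: a_def \<mu>_def sum_lessThan_mult_group sum_divide_distrib[symmetric])
  have centred: "(\<Sum>u<q. \<beta> (s * q + u) - \<mu> s) = 0" for s
    unfolding sum_subtractf \<mu>_def using qn by simp
  have block: "(\<Sum>u<q. (\<beta> (s * q + u) - a)\<^sup>2) = (\<Sum>u<q. (\<beta> (s * q + u) - \<mu> s)\<^sup>2) + q * (\<mu> s - a)\<^sup>2" for s
  proof -
    have "(\<Sum>u<q. (\<beta> (s * q + u) - a)\<^sup>2)
        = (\<Sum>u<q. (\<beta> (s * q + u) - \<mu> s)\<^sup>2 + 2 * (\<mu> s - a) * (\<beta> (s * q + u) - \<mu> s) + (\<mu> s - a)\<^sup>2)"
      by (rule sum.cong) (auto simp: power2_eq_square algebra_simps)
    also have "\<dots> = (\<Sum>u<q. (\<beta> (s * q + u) - \<mu> s)\<^sup>2) + 2 * (\<mu> s - a) * (\<Sum>u<q. \<beta> (s * q + u) - \<mu> s) + q * (\<mu> s - a)\<^sup>2"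
      by (simp add: sum.distrib sum_distrib_left)
    finally show ?thesis using centred by simp
  qed
  have "(\<Sum>t<T * q. (\<beta> t - a)\<^sup>2) = (\<Sum>t<T * q. (\<beta> t - \<mu> (t div q))\<^sup>2) + q * (\<Sum>s<T. (\<mu> s - a)\<^sup>2)"
    using assms(2) by (simp add: sum_lessThan_mult_group block sum.distrib sum_distrib_left)
  then show ?thesis
    unfolding mean a_def[symmetric] using qn by (simp add: field_simps)
qed

lemma variance_refine_blocks:
  assumes "0 < m" "0 < q" "0 < T" "length w = T * (q * m)"
  shows "measure_pmf.variance (map_pmf (block m w) (pmf_of_set {..<T * q})) bias
       = measure_pmf.variance (map_pmf (block (q * m) w) (pmf_of_set {..<T})) bias
         + (\<Sum>t<T * q. (bias (block m w t) - bias (block (q * m) w (t div q)))\<^sup>2) / (T * q)"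
proof -
  define \<beta> where "\<beta> t = bias (block m w t)" for t
  define \<mu> where "\<mu> s = (\<Sum>u<q. \<beta> (s * q + u)) / q" for s
  have coarse: "bias (block (q * m) w s) = \<mu> s" if "s < T" for s
  proof -
    have "(s + 1) * (q * m) \<le> length w"
      using that assms(4) by (metis Suc_eq_plus1 Suc_leI mult_le_mono1)
    then show ?thesis
      unfolding \<mu>_def \<beta>_def by (rule bias_block_mult[OF assms(1,2)])
  qed
  have "measure_pmf.variance (map_pmf (block (q * m) w) (pmf_of_set {..<T})) bias
      = (\<Sum>s<T. (bias (block (q * m) w s) - (\<Sum>s<T. bias (block (q * m) w s)) / T)\<^sup>2) / T"
    using variance_map_pmf_of_set[of "{..<T}" "block (q * m) w" bias] assms(3) by (simp add: lessThan_empty_iff)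
  also have "(\<Sum>s<T. bias (block (q * m) w s)) = (\<Sum>s<T. \<mu> s)"
    by (rule sum.cong) (simp_all add: coarse)
  also have "(\<Sum>s<T. (bias (block (q * m) w s) - (\<Sum>s<T. \<mu> s) / T)\<^sup>2) = (\<Sum>s<T. (\<mu> s - (\<Sum>s<T. \<mu> s) / T)\<^sup>2)"
    by (rule sum.cong) (simp_all add: coarse)
  moreover have "measure_pmf.variance (map_pmf (block m w) (pmf_of_set {..<T * q})) bias
      = (\<Sum>t<T * q. (\<beta> t - (\<Sum>t<T * q. \<beta> t) / (T * q))\<^sup>2) / (T * q)"
    using variance_map_pmf_of_set[of "{..<T * q}" "block m w" bias] assms(2,3) by (simp add: lessThan_empty_iff \<beta>_def)
  moreover have "(\<Sum>t<T * q. (bias (block m w t) - bias (block (q * m) w (t div q)))\<^sup>2)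
      = (\<Sum>t<T * q. (\<beta> t - \<mu> (t div q))\<^sup>2)"
    using assms(2) by (intro sum.cong) (simp_all add: \<beta>_def coarse less_mult_imp_div_less)
  ultimately show ?thesis
    using mean_sq_dev_group[OF assms(3,2), of \<beta>] by (simp add: \<mu>_def)
qed

section \<open>Matchings against \<^term>\<open>A r n\<close>\<close>

lemma sorted_wrt_irrefl_distinct: "(\<And>x. \<not> P x x) \<Longrightarrow> sorted_wrt P xs \<Longrightarrow> distinct xs"
  by (induction xs) auto

lemma finite_matchings: "finite (matchings a b)"
proof (rule finite_subset)
  show "matchings a b \<subseteq> {xs. set xs \<subseteq> {..<length a} \<times> {..<length b} \<and> distinct xs}"
    unfolding matchings_def by (auto intro: sorted_wrt_irrefl_distinct[rotated])
  show "finite {xs. set xs \<subseteq> {..<length a} \<times> {..<length b} \<and> distinct xs}"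
    by (rule finite_subset_distinct) simp
qed

lemma Nil_in_matchings: "[] \<in> matchings a b"
  unfolding matchings_def by simp

lemma adv_attained: "\<exists>M\<in>matchings a b. adv a b = adv_M M a b"
proof -
  have "adv a b \<in> (\<lambda>M. adv_M M a b) ` matchings a b"
    unfolding adv_def using finite_matchings Nil_in_matchings[of a b] by (intro Max_in) auto
  then show ?thesis by auto
qed

lemma adv_Nil: "adv [] b = 0"
proof -
  have "(\<lambda>M. adv_M M [] b) ` matchings [] b = {0}"
    using Nil_in_matchings[of "[]" b] by (auto simp: adv_M_def)
  then show ?thesis unfolding adv_def by simp
qed

text \<open>The \<open>j\<close>-th run of \<^term>\<open>A r n\<close> is \<open>{j * r..<j * r + r}\<close>, a run of the symbol \<open>odd j\<close>.\<close>

locale run_matching =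
  fixes v :: "bool list" and r n :: nat and M :: "(nat \<times> nat) list"
  assumes r_pos: "0 < r" and matching: "M \<in> matchings v (A r n)"
begin

definition run_matches :: "nat \<Rightarrow> (nat \<times> nat) set" where
  "run_matches j = {p \<in> set M. snd p div r = j}"

definition run_pos :: "nat \<Rightarrow> nat set" where
  "run_pos j = fst ` run_matches j"

definition run_span :: "nat \<Rightarrow> nat set" where
  "run_span j = (if run_pos j = {} then {} else {Min (run_pos j)..Max (run_pos j)})"

definition period_pos :: "nat \<Rightarrow> nat set" where
  "period_pos k = run_pos (2 * k) \<union> run_pos (2 * k + 1)"

lemma matching_sorted: "sorted_wrt (\<lambda>p q. fst p < fst q \<and> snd p < snd q) M"
  using matching unfolding matchings_def by simp

lemma matching_pair:
  assumes "p \<in> set M"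
  shows "fst p < length v \<and> snd p < n \<and> v ! fst p = odd (snd p div r)"
  using matching assms unfolding matchings_def by (auto simp: A_def)

lemma matching_order:
  assumes "p \<in> set M" "p' \<in> set M"
  shows "p = p' \<or> (fst p < fst p' \<and> snd p < snd p') \<or> (fst p' < fst p \<and> snd p' < snd p)"
proof -
  obtain i where i: "i < length M" "p = M ! i" using assms(1) by (auto simp: in_set_conv_nth)
  obtain j where j: "j < length M" "p' = M ! j" using assms(2) by (auto simp: in_set_conv_nth)
  have "\<And>a b. a < b \<Longrightarrow> b < length M \<Longrightarrow> fst (M ! a) < fst (M ! b) \<and> snd (M ! a) < snd (M ! b)"
    using matching_sorted by (auto simp: sorted_wrt_iff_nth_less)
  with i j show ?thesis by (cases i j rule: linorder_cases) auto
qed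

lemma fst_less_if_snd_less: "p \<in> set M \<Longrightarrow> p' \<in> set M \<Longrightarrow> snd p < snd p' \<Longrightarrow> fst p < fst p'"
  using matching_order by fastforce

lemma inj_on_fst_matching: "inj_on fst (set M)"
  by (rule inj_onI) (use matching_order in fastforce)

lemma inj_on_snd_matching: "inj_on snd (set M)"
  by (rule inj_onI) (use matching_order in fastforce)

lemma length_matching_le: "length M \<le> length v"
proof -
  have "distinct M"
    using matching_sorted by (rule sorted_wrt_irrefl_distinct[rotated]) simp
  then have "length M = card (fst ` set M)"
    by (simp add: distinct_card card_image inj_on_fst_matching)
  also have "\<dots> \<le> card {..<length v}"
    by (rule card_mono) (use matching_pair in auto)
  finally show ?thesis by simp
qed

lemma finite_run_pos: "finite (run_pos j)"
  unfolding run_pos_def run_matches_def by simp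

lemma card_run_pos: "card (run_pos j) = card (run_matches j)"
  unfolding run_pos_def
  by (rule card_image) (rule inj_on_subset[OF inj_on_fst_matching], auto simp: run_matches_def)

lemma card_run_pos_le: "card (run_pos j) \<le> r"
proof -
  have "card (run_pos j) = card (snd ` run_matches j)"
    unfolding card_run_pos
    by (rule card_image[symmetric]) (rule inj_on_subset[OF inj_on_snd_matching], auto simp: run_matches_def)
  also have "\<dots> \<le> card {j * r..<j * r + r}"
  proof (rule card_mono)
    show "snd ` run_matches j \<subseteq> {j * r..<j * r + r}"
    proof
      fix y assume "y \<in> snd ` run_matches j"
      then have "y div r = j" by (auto simp: run_matches_def)
      moreover have "y = y div r * r + y mod r" "y mod r < r"
        using r_pos by simp_all
      ultimately show "y \<in> {j * r..<j * r + r}" by auto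
    qed
  qed simp
  finally show ?thesis by simp
qed

lemma run_pos_subset_span: "run_pos j \<subseteq> run_span j"
  unfolding run_span_def using finite_run_pos by (auto intro: Min_le Max_ge)

lemma finite_run_span: "finite (run_span j)"
  unfolding run_span_def by simp

lemma card_run_pos_le_span: "card (run_pos j) \<le> card (run_span j)"
  by (rule card_mono[OF finite_run_span run_pos_subset_span])

lemma card_run_pos_le_count: "card (run_pos j) \<le> count_in v (odd j) (run_span j)"
proof -
  have "run_pos j \<subseteq> {i \<in> run_span j. v ! i = odd j}"
    using run_pos_subset_span matching_pair by (auto simp: run_pos_def run_matches_def)
  then show ?thesis
    unfolding count_in_def by (intro card_mono) (auto simp: finite_run_span)
qed

lemma run_pos_less: "a \<in> run_pos j \<Longrightarrow> b \<in> run_pos j' \<Longrightarrow> j < j' \<Longrightarrow> a < b"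
proof -
  assume "a \<in> run_pos j" "b \<in> run_pos j'" "j < j'"
  then obtain p p' where "p \<in> set M" "p' \<in> set M" "a = fst p" "b = fst p'"
      "snd p div r = j" "snd p' div r = j'"
    by (auto simp: run_pos_def run_matches_def)
  moreover have "snd p < snd p'"
    using \<open>j < j'\<close> calculation by (metis div_le_mono not_le)
  ultimately show "a < b" using fst_less_if_snd_less by blast
qed

lemma run_span_disjoint: "j \<noteq> j' \<Longrightarrow> run_span j \<inter> run_span j' = {}"
proof -
  have less: "run_span j \<inter> run_span j' = {}" if "j < j'" for j j'
  proof (cases "run_pos j = {} \<or> run_pos j' = {}")
    case False
    then have "Max (run_pos j) < Min (run_pos j')"
      using run_pos_less[OF Max_in[OF finite_run_pos] Min_in[OF finite_run_pos] that] by auto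
    then show ?thesis using False by (auto simp: run_span_def)
  qed (auto simp: run_span_def)
  show "j \<noteq> j' \<Longrightarrow> run_span j \<inter> run_span j' = {}"
    using less[of j j'] less[of j' j] by (cases j j' rule: linorder_cases) auto
qed

lemma run_span_subset: "run_span j \<subseteq> {..<length v}"
proof (cases "run_pos j = {}")
  case False
  then have "Max (run_pos j) \<in> run_pos j" using finite_run_pos by simp
  then have "Max (run_pos j) < length v" using matching_pair by (auto simp: run_pos_def run_matches_def)
  then show ?thesis using False by (auto simp: run_span_def)
qed (simp add: run_span_def)

lemma sum_card_run_span_le: "finite J \<Longrightarrow> (\<Sum>j\<in>J. card (run_span j)) \<le> length v"
proof -
  assume "finite J"
  then have "(\<Sum>j\<in>J. card (run_span j)) = card (\<Union>j\<in>J. run_span j)"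
    by (subst card_UN_disjoint) (auto simp: finite_run_span run_span_disjoint)
  also have "\<dots> \<le> card {..<length v}"
    using run_span_subset by (intro card_mono) auto
  finally show ?thesis by simp
qed

lemma length_matching_eq_sum:
  assumes "n \<le> K * r"
  shows "length M = (\<Sum>j<K. card (run_pos j))"
proof -
  have "set M = (\<Union>j<K. run_matches j)"
  proof
    show "set M \<subseteq> (\<Union>j<K. run_matches j)"
    proof
      fix p assume "p \<in> set M"
      then have "snd p < K * r" using matching_pair assms by fastforce
      then have "snd p div r < K" by (rule less_mult_imp_div_less)
      then show "p \<in> (\<Union>j<K. run_matches j)" using \<open>p \<in> set M\<close> by (auto simp: run_matches_def)
    qed
  qed (auto simp: run_matches_def)
  moreover have "distinct M"
    using matching_sorted by (rule sorted_wrt_irrefl_distinct[rotated]) simp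
  ultimately have "length M = card (\<Union>j<K. run_matches j)"
    by (metis distinct_card)
  also have "\<dots> = (\<Sum>j<K. card (run_matches j))"
    by (rule card_UN_disjoint) (auto simp: run_matches_def)
  finally show ?thesis by (simp add: card_run_pos)
qed

lemma period_pos_less: "a \<in> period_pos k \<Longrightarrow> b \<in> period_pos k' \<Longrightarrow> k < k' \<Longrightarrow> a < b"
  unfolding period_pos_def by (elim UnE) (auto elim!: run_pos_less)

lemma period_pos_subset: "period_pos k \<subseteq> {..<length v}"
  unfolding period_pos_def using run_pos_subset_span run_span_subset by blast

end

text \<open>If the first run of a period is matched inside a stretch of length \<open>x\<^sub>0\<close> of density \<open>a\<close>
  and the second inside a stretch of length \<open>x\<^sub>1\<close> of density \<open>1 - a\<close>, the two runs gain no advantage,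
  because \<open>1/a + 1/(1 - a) \<ge> 4\<close>.\<close>

lemma two_runs_excess_nonpos:
  fixes a u0 u1 x0 x1 r :: real
  assumes "0 \<le> a" "a \<le> 1" "0 \<le> u0" "0 \<le> u1" "u0 \<le> r" "u1 \<le> r"
    "u0 \<le> a * x0" "u1 \<le> (1 - a) * x1" "0 \<le> x0" "0 \<le> x1"
  shows "3 * u0 - x0 - r + 3 * u1 - x1 - r \<le> 0"
proof (cases "a = 0 \<or> a = 1")
  case True
  then show ?thesis using assms by auto
next
  case False
  then have a0: "0 < a" and a1: "a < 1" using assms by auto
  define b where "b = 1 - a"
  have b0: "0 < b" using a1 b_def by simp
  have x0: "u0 / a \<le> x0" using assms(7) a0 by (simp add: pos_divide_le_eq mult.commute)
  have x1: "u1 / b \<le> x1" using assms(8) b0 b_def by (simp add: pos_divide_le_eq mult.commute)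
  have "a * b \<le> 1 / 4"
    using zero_le_power2[of "a - 1/2"] unfolding b_def by (simp add: power2_eq_square algebra_simps)
  moreover have "1 / a + 1 / b = 1 / (a * b)"
    using a0 b0 b_def by (simp add: field_simps)
  ultimately have inv: "1 / a + 1 / b \<ge> 4"
    using a0 b0 by (simp add: field_simps)
  have e0: "3 * u0 - x0 \<le> u0 * (3 - 1 / a)" using x0 by (simp add: algebra_simps)
  have e1: "3 * u1 - x1 \<le> u1 * (3 - 1 / b)" using x1 by (simp add: algebra_simps)
  have m0: "u0 * (3 - 1 / a) \<le> r * max 0 (3 - 1 / a)"
    using assms(3,5) by (cases "3 - 1 / a \<ge> 0") (auto intro: mult_mono mult_nonneg_nonpos)
  have m1: "u1 * (3 - 1 / b) \<le> r * max 0 (3 - 1 / b)"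
    using assms(4,6) by (cases "3 - 1 / b \<ge> 0") (auto intro: mult_mono mult_nonneg_nonpos)
  have "1 / a \<ge> 1" "1 / b \<ge> 1" using a0 a1 b0 b_def by simp_all
  then have "max 0 (3 - 1 / a) + max 0 (3 - 1 / b) \<le> 2" using inv by linarith
  then have "r * max 0 (3 - 1 / a) + r * max 0 (3 - 1 / b) \<le> 2 * r"
    using assms(3,5) by (metis distrib_left mult.commute mult_right_mono order_trans)
  then show ?thesis using e0 e1 m0 m1 by linarith
qed

lemma two_runs_excess_le:
  fixes a u0 u1 x0 x1 r e0 e1 :: real
  assumes "0 \<le> a" "a \<le> 1" "0 \<le> u0" "0 \<le> u1" "u0 \<le> r" "u1 \<le> r"
    "u0 \<le> a * x0 + e0" "u1 \<le> (1 - a) * x1 + e1" "0 \<le> x0" "0 \<le> x1" "0 \<le> e0" "0 \<le> e1"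
  shows "3 * u0 - x0 - r + 3 * u1 - x1 - r \<le> 3 * (e0 + e1)"
proof -
  define w0 where "w0 = min u0 (a * x0)"
  define w1 where "w1 = min u1 ((1 - a) * x1)"
  have "3 * w0 - x0 - r + 3 * w1 - x1 - r \<le> 0"
    by (rule two_runs_excess_nonpos[of a]) (use assms in \<open>auto simp: w0_def w1_def\<close>)
  moreover have "u0 \<le> w0 + e0" "u1 \<le> w1 + e1"
    using assms unfolding w0_def w1_def by (auto simp: min_def)
  ultimately show ?thesis by (simp add: algebra_simps)
qed

lemma error_terms_le:
  fixes e N L r d :: real
  assumes "0 < e" "e < 1/200" "0 < L" "L \<le> N" "0 \<le> r" "r * d \<le> N" "r \<le> e\<^sup>2 * L"
  shows "12 * (e\<^sup>2 * r) * (d + 1) + 2 * r * (N / L) + 2 * r \<le> e * N / 8"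
proof -
  have "0 < N" using assms(3,4) by linarith
  have e2: "e\<^sup>2 \<le> e / 200"
    using assms(1,2) by (simp add: power2_eq_square)
  then have "e\<^sup>2 * N \<le> e * N / 200"
    using \<open>0 < N\<close> by (simp add: mult_right_mono)
  have r: "r \<le> e\<^sup>2 * N"
    using assms(4,7) by (meson mult_left_mono order_trans zero_le_power2)
  have "r / L \<le> e\<^sup>2"
    using assms(3,7) by (simp add: pos_divide_le_eq)
  then have "r * (N / L) \<le> e\<^sup>2 * N"
    using \<open>0 < N\<close> by (metis mult.commute mult_right_mono order_less_imp_le times_divide_eq_right)
  moreover have "e\<^sup>2 * r * (d + 1) \<le> e\<^sup>2 * N + e\<^sup>2 * N / 100"
  proof -
    have "e\<^sup>2 * (r * d) \<le> e\<^sup>2 * N"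
      using assms(6) by (simp add: mult_left_mono)
    moreover have "e * N \<le> 1 * N"
      using assms(2) \<open>0 < N\<close> by (intro mult_right_mono) simp_all
    then have "r \<le> N / 100"
      using r \<open>e\<^sup>2 * N \<le> e * N / 200\<close> \<open>0 < N\<close> by linarith
    then have "e\<^sup>2 * r \<le> e\<^sup>2 * N / 100"
      by (metis mult_left_mono times_divide_eq_right zero_le_power2)
    ultimately show ?thesis
      by (simp add: algebra_simps)
  qed
  moreover have "12 * (e\<^sup>2 * r) * (d + 1) = 12 * (e\<^sup>2 * r * (d + 1))" "2 * r * (N / L) = 2 * (r * (N / L))"
    by simp_all
  moreover have "0 \<le> e\<^sup>2 * N"
    using \<open>0 < N\<close> by simp
  ultimately show ?thesis
    using r \<open>e\<^sup>2 * N \<le> e * N / 200\<close> by linarith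
qed

lemma mean_square_ge:
  fixes x :: "nat \<Rightarrow> real"
  assumes "0 < N" "0 \<le> c" "c * N \<le> (\<Sum>t<N. \<bar>x t\<bar>)"
  shows "c\<^sup>2 \<le> (\<Sum>t<N. (x t)\<^sup>2) / N"
proof -
  have "(c * N)\<^sup>2 \<le> (\<Sum>t<N. \<bar>x t\<bar>)\<^sup>2"
    using assms by (intro power_mono) simp_all
  also have "\<dots> \<le> (\<Sum>t<N. (x t)\<^sup>2) * N"
    using sum_squared_le_sum_of_squares[of "\<lambda>t. \<bar>x t\<bar>" "{..<N}"] by simp
  finally show ?thesis
    using assms(1) by (simp add: power2_eq_square field_simps)
qed

section \<open>Fine and coarse blocks along a matching\<close>

text \<open>Fine blocks have length \<open>l\<close>, coarse blocks length \<open>L\<close>; \<open>dev t\<close> is the discrepancy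
  between the ones in fine block \<open>t\<close> and the share predicted by the density of its coarse block.\<close>

locale block_run_matching = run_matching +
  fixes l L q :: nat
  assumes l_pos: "0 < l" and q_pos: "0 < q" and L_eq: "L = q * l" and L_dvd: "L dvd length v"
begin

definition ones_fine :: "nat \<Rightarrow> nat" where
  "ones_fine t = count_in v True {t * l..<t * l + l}"

definition ones_coarse :: "nat \<Rightarrow> nat" where
  "ones_coarse s = count_in v True {s * L..<s * L + L}"

definition dev :: "nat \<Rightarrow> real" where
  "dev t = \<bar>real (ones_fine t) - real l * real (ones_coarse (t div q)) / real L\<bar>"

definition density :: "bool \<Rightarrow> nat \<Rightarrow> real" where
  "density b s = (if b then real (ones_coarse s) / L else 1 - real (ones_coarse s) / L)"

definition inner_blocks :: "nat \<Rightarrow> nat \<Rightarrow> nat set" where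
  "inner_blocks lo hi = {(lo + l - 1) div l..<(hi + 1) div l}"

lemma L_pos: "0 < L"
  using L_eq l_pos q_pos by simp

lemma l_dvd_length: "l dvd length v"
  using dvd_trans[OF _ L_dvd] L_eq by simp

lemma density_bounds: "0 \<le> density b s" "density b s \<le> 1"
proof -
  have "ones_coarse s \<le> card {s * L..<s * L + L}"
    unfolding ones_coarse_def count_in_def by (rule card_mono) auto
  then show "0 \<le> density b s" "density b s \<le> 1"
    using L_pos unfolding density_def by (auto simp: field_simps)
qed

lemma dev_nonneg: "0 \<le> dev t"
  unfolding dev_def by simp

lemma count_fine_block_le:
  "real (count_in v b {t * l..<t * l + l}) \<le> density b (t div q) * l + dev t"
proof (cases b)
  case False
  have "real (count_in v False {t * l..<t * l + l}) = real l - real (ones_fine t)"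
    using count_in_compl[of "{t * l..<t * l + l}" v] unfolding ones_fine_def by simp
  then show ?thesis
    using False abs_ge_minus_self[of "real (ones_fine t) - real l * real (ones_coarse (t div q)) / real L"]
    unfolding density_def dev_def by (simp add: algebra_simps)
qed (use L_pos in \<open>simp add: ones_fine_def density_def dev_def field_simps\<close>)

lemma inner_blocks_mem: "t \<in> inner_blocks lo hi \<Longrightarrow> lo \<le> t * l \<and> t * l + l \<le> hi + 1"
proof -
  assume t: "t \<in> inner_blocks lo hi"
  have "lo + l - 1 < (lo + l - 1) div l * l + l"
    using l_pos by (metis div_mult_mod_eq mod_less_divisor nat_add_left_cancel_less)
  moreover have "(lo + l - 1) div l * l \<le> t * l" using t by (simp add: inner_blocks_def)
  ultimately have "lo \<le> t * l" using l_pos by linarith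
  have "(t + 1) * l \<le> (hi + 1) div l * l"
    using t by (intro mult_le_mono1) (simp add: inner_blocks_def)
  also have "\<dots> \<le> hi + 1"
    by (rule div_times_less_eq_dividend)
  finally have "t * l + l \<le> hi + 1" by simp
  with \<open>lo \<le> t * l\<close> show ?thesis by simp
qed

lemma inner_blocks_div_q:
  assumes "s * L \<le> lo" "hi < s * L + L" "t \<in> inner_blocks lo hi"
  shows "t div q = s"
proof -
  have t: "lo \<le> t * l" "t * l + l \<le> hi + 1"
    using inner_blocks_mem[OF assms(3)] by auto
  have "s * q * l = s * L" "(s + 1) * q * l = s * L + L" "(t + 1) * l = t * l + l"
    using L_eq by (simp_all add: algebra_simps)
  then have "s * q * l \<le> t * l" "(t + 1) * l \<le> (s + 1) * q * l"
    using t assms(1,2) by linarith+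
  then have "s * q \<le> t" "t + 1 \<le> (s + 1) * q"
    using l_pos mult_le_cancel2 by blast+
  then show ?thesis
    by (metis Suc_eq_plus1 add.commute div_nat_eqI less_eq_Suc_le mult.commute mult_Suc)
qed

lemma count_inner_blocks_le:
  assumes "a \<le> c" "\<forall>t\<in>{a..<c}. t div q = s"
  shows "real (count_in v b {a * l..<c * l})
    \<le> density b s * (real (c * l) - real (a * l)) + (\<Sum>t\<in>{a..<c}. dev t)"
proof -
  have "real (count_in v b {a * l..<c * l}) = (\<Sum>t\<in>{a..<c}. real (count_in v b {t * l..<t * l + l}))"
    unfolding count_in_eq_sum[OF finite_atLeastLessThan] using assms(1) by (rule sum_atLeastLessThan_group)
  also have "\<dots> \<le> (\<Sum>t\<in>{a..<c}. density b s * l + dev t)"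
    by (rule sum_mono) (use count_fine_block_le assms(2) in force)
  also have "\<dots> = (real c - real a) * (density b s * l) + (\<Sum>t\<in>{a..<c}. dev t)"
    using assms(1) by (simp add: sum.distrib of_nat_diff)
  finally show ?thesis by (simp add: algebra_simps)
qed

text \<open>The number of occurrences of a symbol in a stretch inside one coarse block is what the
  coarse density predicts, up to two partial fine blocks at the ends and the deviations of the
  fine blocks in between.\<close>

lemma count_interval_le:
  assumes "s * L \<le> lo" "lo \<le> hi" "hi < s * L + L"
  shows "real (count_in v b {lo..hi})
    \<le> density b s * (real hi + 1 - real lo) + 2 * l + (\<Sum>t\<in>inner_blocks lo hi. dev t)"
proof -
  define a where "a = (lo + l - 1) div l"
  define c where "c = (hi + 1) div l"
  have a: "lo \<le> a * l" "a * l < lo + l"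
    using l_pos div_mult_mod_eq[of "lo + l - 1" l] mod_less_divisor[OF l_pos, of "lo + l - 1"]
    unfolding a_def by linarith+
  have c: "c * l \<le> hi + 1" "hi + 1 < c * l + l"
    using l_pos div_mult_mod_eq[of "hi + 1" l] mod_less_divisor[OF l_pos, of "hi + 1"]
    unfolding c_def by linarith+
  have whole: "count_in v b {lo..hi} = count_in v b {lo..<hi + 1}"
    by (simp add: atLeastLessThanSuc_atLeastAtMost)
  have "0 \<le> (\<Sum>t\<in>inner_blocks lo hi. dev t)" "0 \<le> density b s"
    by (simp_all add: sum_nonneg dev_nonneg density_bounds)
  show ?thesis
  proof (cases "c \<le> a")
    case True
    then have "c * l \<le> a * l" by simp
    then have "real (count_in v b {lo..<hi + 1}) \<le> 2 * l"
      using count_in_le[of lo "hi + 1" v b] assms a c by linarith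
    moreover have "0 \<le> density b s * (real hi + 1 - real lo)"
      using \<open>0 \<le> density b s\<close> assms(2) by simp
    ultimately show ?thesis
      using whole \<open>0 \<le> (\<Sum>t\<in>inner_blocks lo hi. dev t)\<close> by linarith
  next
    case False
    then have "a * l \<le> c * l" by simp
    have split: "real (count_in v b {lo..<hi + 1}) = real (count_in v b {lo..<a * l})
        + real (count_in v b {a * l..<c * l}) + real (count_in v b {c * l..<hi + 1})"
      using count_in_split a c \<open>a * l \<le> c * l\<close> by (metis le_trans)
    have ends: "real (count_in v b {lo..<a * l}) \<le> l" "real (count_in v b {c * l..<hi + 1}) \<le> l"
      using count_in_le[of lo "a * l" v b] count_in_le[of "c * l" "hi + 1" v b] a c by linarith+
    have "\<forall>t\<in>{a..<c}. t div q = s"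
      using inner_blocks_div_q[OF assms(1,3)] by (simp add: inner_blocks_def a_def c_def)
    then have "real (count_in v b {a * l..<c * l})
        \<le> density b s * (real (c * l) - real (a * l)) + (\<Sum>t\<in>inner_blocks lo hi. dev t)"
      using False count_inner_blocks_le[of a c] by (simp add: inner_blocks_def a_def c_def)
    moreover have "density b s * (real (c * l) - real (a * l)) \<le> density b s * (real hi + 1 - real lo)"
      using a c \<open>0 \<le> density b s\<close> by (intro mult_left_mono) linarith+
    ultimately show ?thesis
      using whole split ends by linarith
  qed
qed

definition span_blocks :: "nat \<Rightarrow> nat set" where
  "span_blocks j = (if run_pos j = {} then {} else inner_blocks (Min (run_pos j)) (Max (run_pos j)))"

definition span_dev :: "nat \<Rightarrow> real" where
  "span_dev j = (\<Sum>t\<in>span_blocks j. dev t)"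

text \<open>The share of run \<open>j\<close> in the numerator \<open>3|M| - |v| - n\<close> of the advantage.\<close>

definition run_excess :: "nat \<Rightarrow> real" where
  "run_excess j = 3 * real (card (run_pos j)) - real (card (run_span j)) - real r"

definition straddles :: "nat \<Rightarrow> bool" where
  "straddles k \<longleftrightarrow> period_pos k \<noteq> {} \<and> Min (period_pos k) div L \<noteq> Max (period_pos k) div L"

lemma span_blocks_subset: "t \<in> span_blocks j \<Longrightarrow> t * l \<in> run_span j \<and> t < length v div l"
proof -
  assume t: "t \<in> span_blocks j"
  then have ne: "run_pos j \<noteq> {}" by (auto simp: span_blocks_def split: if_splits)
  have mem: "Min (run_pos j) \<le> t * l" "t * l + l \<le> Max (run_pos j) + 1"
    using inner_blocks_mem t ne by (auto simp: span_blocks_def)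
  then have "t * l \<in> run_span j" using ne l_pos by (auto simp: run_span_def)
  moreover have "Max (run_pos j) < length v"
    using Max_in[OF finite_run_pos ne] run_pos_subset_span run_span_subset by blast
  then have "(t + 1) * l \<le> length v div l * l"
    using mem l_dvd_length by simp
  then have "t < length v div l"
    using l_pos mult_le_cancel2 by (metis Suc_eq_plus1 Suc_le_eq)
  ultimately show ?thesis by simp
qed

lemma finite_span_blocks: "finite (span_blocks j)"
  unfolding span_blocks_def inner_blocks_def by simp

lemma span_dev_nonneg: "0 \<le> span_dev j"
  unfolding span_dev_def by (simp add: sum_nonneg dev_nonneg)

lemma sum_span_dev_le: "finite J \<Longrightarrow> (\<Sum>j\<in>J. span_dev j) \<le> (\<Sum>t<length v div l. dev t)"
proof -
  assume "finite J"
  have disjoint: "span_blocks j \<inter> span_blocks j' = {}" if "j \<noteq> j'" for j j'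
    using span_blocks_subset run_span_disjoint[OF that] by blast
  have "(\<Sum>j\<in>J. span_dev j) = (\<Sum>t\<in>(\<Union>j\<in>J. span_blocks j). dev t)"
    unfolding span_dev_def using \<open>finite J\<close>
    by (subst sum.UNION_disjoint) (auto simp: finite_span_blocks disjoint)
  also have "\<dots> \<le> (\<Sum>t<length v div l. dev t)"
    by (rule sum_mono2) (use span_blocks_subset dev_nonneg in auto)
  finally show ?thesis .
qed

lemma card_run_pos_le_density:
  assumes "\<forall>x\<in>run_pos j. x div L = s"
  shows "real (card (run_pos j)) \<le> density (odd j) s * card (run_span j) + 2 * l + span_dev j"
proof (cases "run_pos j = {}")
  case True
  then show ?thesis
    using density_bounds[of "odd j" s] span_dev_nonneg[of j] by simp
next
  case False
  define lo where "lo = Min (run_pos j)"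
  define hi where "hi = Max (run_pos j)"
  have "lo \<in> run_pos j" "hi \<in> run_pos j" "lo \<le> hi"
    using False finite_run_pos by (simp_all add: lo_def hi_def)
  then have "s * L \<le> lo" "hi < s * L + L"
    using assms L_pos div_times_less_eq_dividend[of lo L]
      div_mult_mod_eq[of hi L] mod_less_divisor[OF L_pos, of hi] by (auto simp: mult.commute)
  have span: "run_span j = {lo..hi}"
    using False by (simp add: run_span_def lo_def hi_def)
  have "real (card (run_pos j)) \<le> real (count_in v (odd j) {lo..hi})"
    using card_run_pos_le_count[of j] span by simp
  also have "\<dots> \<le> density (odd j) s * (real hi + 1 - real lo) + 2 * l + (\<Sum>t\<in>inner_blocks lo hi. dev t)"
    by (rule count_interval_le) fact+
  moreover have "real (card (run_span j)) = real hi + 1 - real lo"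
    using span \<open>lo \<le> hi\<close> by simp
  moreover have "span_dev j = (\<Sum>t\<in>inner_blocks lo hi. dev t)"
    using False by (simp add: span_dev_def span_blocks_def lo_def hi_def)
  ultimately show ?thesis by simp
qed

lemma run_excess_le: "run_excess j \<le> r"
  using card_run_pos_le[of j] card_run_pos_le_span[of j] unfolding run_excess_def by linarith

lemma period_excess_le:
  "run_excess (2 * k) + run_excess (2 * k + 1)
    \<le> 12 * l + 3 * (span_dev (2 * k) + span_dev (2 * k + 1)) + (if straddles k then 2 * real r else 0)"
proof (cases "straddles k")
  case True
  then show ?thesis
    using run_excess_le[of "2 * k"] run_excess_le[of "2 * k + 1"]
      span_dev_nonneg[of "2 * k"] span_dev_nonneg[of "2 * k + 1"] by simp
next
  case False
  define s where "s = Min (period_pos k) div L"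
  have fin: "finite (period_pos k)"
    by (simp add: period_pos_def finite_run_pos)
  have "\<forall>x\<in>period_pos k. x div L = s"
  proof
    fix x assume x: "x \<in> period_pos k"
    have "Min (period_pos k) div L \<le> x div L" "x div L \<le> Max (period_pos k) div L"
      using x fin by (simp_all add: div_le_mono)
    then show "x div L = s"
      using False x by (auto simp: straddles_def s_def)
  qed
  then have b0: "real (card (run_pos (2 * k))) \<le> density False s * card (run_span (2 * k)) + 2 * l + span_dev (2 * k)"
    and b1: "real (card (run_pos (2 * k + 1))) \<le> density True s * card (run_span (2 * k + 1)) + 2 * l + span_dev (2 * k + 1)"
    using card_run_pos_le_density[of "2 * k" s] card_run_pos_le_density[of "2 * k + 1" s]
    by (simp_all add: period_pos_def)
  have "density True s = 1 - density False s"
    by (simp add: density_def)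
  then have "3 * real (card (run_pos (2 * k))) - card (run_span (2 * k)) - r
      + 3 * real (card (run_pos (2 * k + 1))) - card (run_span (2 * k + 1)) - r
      \<le> 3 * ((2 * l + span_dev (2 * k)) + (2 * l + span_dev (2 * k + 1)))"
    by (intro two_runs_excess_le[of "density False s"])
      (use density_bounds card_run_pos_le b0 b1 span_dev_nonneg in simp_all)
  then show ?thesis
    using False unfolding run_excess_def by simp
qed

lemma card_straddles_le: "card {k\<in>{..<K}. straddles k} \<le> length v div L"
proof -
  let ?f = "\<lambda>k. Max (period_pos k) div L"
  have fin: "finite (period_pos k)" for k
    by (simp add: period_pos_def finite_run_pos)
  have mono: "?f k < ?f k'" if "straddles k" "straddles k'" "k < k'" for k k'
  proof -
    have ne: "period_pos k \<noteq> {}" "period_pos k' \<noteq> {}"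
      using that straddles_def by auto
    have "Max (period_pos k) < Min (period_pos k')"
      using period_pos_less[OF Max_in[OF fin ne(1)] Min_in[OF fin ne(2)] that(3)] .
    then have "?f k \<le> Min (period_pos k') div L"
      by (simp add: div_le_mono)
    moreover have "Min (period_pos k') div L \<le> ?f k'"
      using fin ne by (simp add: div_le_mono)
    moreover have "Min (period_pos k') div L \<noteq> ?f k'"
      using that(2) by (simp add: straddles_def)
    ultimately show ?thesis by linarith
  qed
  have "inj_on ?f {k\<in>{..<K}. straddles k}"
  proof (rule inj_onI)
    fix k k' assume "k \<in> {k\<in>{..<K}. straddles k}" "k' \<in> {k\<in>{..<K}. straddles k}" "?f k = ?f k'"
    then show "k = k'"
      using mono[of k k'] mono[of k' k] by (metis (no_types, lifting) mem_Collect_eq less_irrefl nat_neq_iff)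
  qed
  moreover have "?f ` {k\<in>{..<K}. straddles k} \<subseteq> {..<length v div L}"
  proof
    fix x assume "x \<in> ?f ` {k\<in>{..<K}. straddles k}"
    then obtain k where k: "straddles k" "x = ?f k" by auto
    then have "period_pos k \<noteq> {}"
      by (simp add: straddles_def)
    then have "Max (period_pos k) < length v"
      using Max_in[OF fin] period_pos_subset by blast
    also have "length v = length v div L * L"
      using L_dvd by simp
    finally show "x \<in> {..<length v div L}"
      using k(2) by (simp add: less_mult_imp_div_less)
  qed
  ultimately have "card {k\<in>{..<K}. straddles k} \<le> card {..<length v div L}"
    by (intro card_inj_on_le) simp_all
  then show ?thesis by simp
qed

lemma sum_run_excess_le:
  "(\<Sum>j<K * 2. run_excess j)
    \<le> 12 * real l * K + 3 * (\<Sum>t<length v div l. dev t) + 2 * real r * real (length v div L)"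
proof -
  have pairs: "(\<Sum>j<K * 2. g j) = (\<Sum>k<K. g (2 * k) + g (2 * k + 1))" for g :: "nat \<Rightarrow> real"
    unfolding sum_lessThan_mult_group[of g K 2] by (simp add: numeral_2_eq_2 mult.commute)
  have "(\<Sum>j<K * 2. run_excess j)
      \<le> (\<Sum>k<K. 12 * real l + 3 * (span_dev (2 * k) + span_dev (2 * k + 1)) + (if straddles k then 2 * real r else 0))"
    unfolding pairs by (intro sum_mono) (use period_excess_le in simp)
  also have "\<dots> = 12 * real l * K + 3 * (\<Sum>j<K * 2. span_dev j) + card {k\<in>{..<K}. straddles k} * (2 * real r)"
    by (simp add: pairs sum.distrib sum_distrib_left sum.If_cases Int_def conj_commute)
  also have "\<dots> \<le> 12 * real l * K + 3 * (\<Sum>t<length v div l. dev t) + real (length v div L) * (2 * real r)"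
    using sum_span_dev_le[of "{..<K * 2}"] card_straddles_le[of K]
    by (intro add_mono mult_right_mono) simp_all
  finally show ?thesis by (simp add: mult.commute)
qed

lemma matching_excess_le:
  "3 * real (length M) - real (length v) - real n
    \<le> 3 * (\<Sum>t<length v div l. dev t) + 12 * real l * real (n div (2 * r) + 1)
      + 2 * real r * real (length v div L) + 2 * real r"
proof -
  define K where "K = n div (2 * r) + 1"
  have "n = n div (2 * r) * (2 * r) + n mod (2 * r)"
    by (rule div_mult_mod_eq[symmetric])
  moreover have "n mod (2 * r) < 2 * r"
    using r_pos by simp
  moreover have "K * 2 * r = n div (2 * r) * (2 * r) + 2 * r"
    unfolding K_def by (simp add: algebra_simps)
  ultimately have "n < K * 2 * r" "K * 2 * r \<le> n + 2 * r"
    by linarith+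
  moreover have "real (length M) = (\<Sum>j<K * 2. real (card (run_pos j)))"
    using length_matching_eq_sum[of "K * 2"] \<open>n < K * 2 * r\<close> by (simp add: mult.assoc)
  moreover have "(\<Sum>j<K * 2. real (card (run_span j))) \<le> real (length v)"
    using sum_card_run_span_le[of "{..<K * 2}"] by (simp flip: of_nat_sum)
  moreover have "(\<Sum>j<K * 2. run_excess j)
      = 3 * (\<Sum>j<K * 2. real (card (run_pos j))) - (\<Sum>j<K * 2. real (card (run_span j))) - real (K * 2 * r)"
    unfolding run_excess_def by (simp add: sum_subtractf sum_distrib_left)
  ultimately show ?thesis
    using sum_run_excess_le[of K] unfolding K_def[symmetric] by linarith
qed

lemma bias_block_diff:
  assumes "t < length v div l"
  shows "\<bar>bias (block l v t) - bias (block L v (t div q))\<bar> = 2 / l * dev t"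
proof -
  have "length v = length v div L * q * l"
    using L_dvd L_eq by (metis dvd_div_mult_self mult.assoc)
  then have div_l: "length v div l = length v div L * q"
    using l_pos by (metis nonzero_mult_div_cancel_right not_less0 zero_less_iff_neq_zero)
  have "(t + 1) * l \<le> length v"
    using assms l_dvd_length by (metis Suc_eq_plus1 Suc_leI dvd_div_mult_self mult_le_mono1)
  moreover have "(t div q + 1) * L \<le> length v"
    using assms q_pos L_dvd unfolding div_l
    by (metis Suc_eq_plus1 Suc_leI dvd_div_mult_self less_mult_imp_div_less mult_le_mono1)
  ultimately have "bias (block l v t) - bias (block L v (t div q))
      = 2 / l * (real (ones_fine t) - real l * real (ones_coarse (t div q)) / real L)"
    using l_pos L_pos
    by (simp add: bias_block ones_fine_def ones_coarse_def field_simps)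
  then have "\<bar>bias (block l v t) - bias (block L v (t div q))\<bar>
      = \<bar>2 / real l\<bar> * \<bar>real (ones_fine t) - real l * real (ones_coarse (t div q)) / real L\<bar>"
    by (simp only: abs_mult)
  then show ?thesis
    unfolding dev_def by simp
qed

lemma sum_dev_lower_bound:
  fixes \<epsilon> :: real
  assumes "0 < \<epsilon>" "\<epsilon> < 1/200" "real l = \<epsilon>\<^sup>2 * real r" "real r \<le> \<epsilon>\<^sup>2 * real L"
    and "0 < length v" "\<epsilon> / 2 \<le> adv_M M v (A r n)"
  shows "\<epsilon> * length v / 8 \<le> (\<Sum>t<length v div l. dev t)"
proof -
  have excess: "\<epsilon> * length v / 2 \<le> 3 * real (length M) - real (length v) - real n"
    using assms(5,6) by (simp add: adv_M_def A_def field_simps)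
  moreover have "real (length M) \<le> real (length v)" "0 \<le> \<epsilon> * length v / 2"
    using length_matching_le assms(1) by simp_all
  ultimately have "real n \<le> 2 * real (length v)"
    by linarith
  moreover have "real (n div (2 * r)) \<le> real n / (2 * real r)"
    using of_nat_div_le_of_nat[of n "2 * r"] by simp
  then have "real r * real (n div (2 * r)) \<le> real n / 2"
    using r_pos by (simp add: field_simps)
  ultimately have "real r * real (n div (2 * r)) \<le> real (length v)"
    by linarith
  moreover have "L \<le> length v"
    using L_dvd assms(5) by (rule dvd_imp_le)
  moreover have "real (length v div L) = real (length v) / real L"
    using L_dvd by (simp add: real_of_nat_div)
  ultimately have "12 * real l * real (n div (2 * r) + 1) + 2 * real r * real (length v div L) + 2 * real r
      \<le> \<epsilon> * length v / 8"
    using error_terms_le[OF assms(1,2), of L "length v" r "n div (2 * r)"] L_pos assms(3,4)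
    by (simp add: add.commute)
  then show ?thesis
    using excess matching_excess_le by linarith
qed

lemma sum_bias_diff_lower_bound:
  fixes \<epsilon> :: real
  assumes "0 < \<epsilon>" "\<epsilon> < 1/200" "real l = \<epsilon>\<^sup>2 * real r" "real r \<le> \<epsilon>\<^sup>2 * real L"
    and "0 < length v" "\<epsilon> / 2 \<le> adv_M M v (A r n)"
  shows "\<epsilon> / 4 * (length v div l) \<le> (\<Sum>t<length v div l. \<bar>bias (block l v t) - bias (block L v (t div q))\<bar>)"
proof -
  have "real (length v) = (length v div l) * l"
    using l_dvd_length by (metis dvd_div_mult_self of_nat_mult)
  then have "\<epsilon> / 4 * (length v div l) = 2 / l * (\<epsilon> * length v / 8)"
    using l_pos by (simp add: field_simps)
  also have "\<dots> \<le> 2 / l * (\<Sum>t<length v div l. dev t)"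
    using sum_dev_lower_bound[OF assms] by (intro mult_left_mono) simp_all
  also have "\<dots> = (\<Sum>t<length v div l. \<bar>bias (block l v t) - bias (block L v (t div q))\<bar>)"
    unfolding sum_distrib_left by (rule sum.cong) (simp_all add: bias_block_diff)
  finally show ?thesis .
qed

end

section \<open>The variance gain\<close>

lemma variance_gain:
  fixes \<epsilon> :: real
  assumes "0 < \<epsilon>" "\<epsilon> < 1/200" "0 < m" "m dvd L" "L dvd length v" "0 < r"
    and "real m = \<epsilon>\<^sup>2 * real r" "real r \<le> \<epsilon>\<^sup>2 * real L" "\<epsilon> / 2 \<le> adv v (A r n)"
  shows "measure_pmf.variance (map_pmf (block L v) (pmf_of_set {..<length v div L})) bias + \<epsilon> ^ 3 / 1200
    \<le> measure_pmf.variance (map_pmf (block m v) (pmf_of_set {..<length v div m})) bias"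
proof -
  have "0 < length v"
    using assms(1,9) adv_Nil by (cases v) auto
  obtain M where M: "M \<in> matchings v (A r n)" "adv v (A r n) = adv_M M v (A r n)"
    using adv_attained by blast
  define q where "q = L div m"
  define T where "T = length v div L"
  have "0 < L" using assms(6,8) \<open>0 < \<epsilon>\<close> by (cases L) (auto simp: not_less)
  have "L = q * m" "length v = T * L"
    using assms(4,5) by (simp_all add: q_def T_def)
  then have "0 < q" "0 < T"
    using \<open>0 < L\<close> \<open>0 < length v\<close> by (auto intro: gr0I)
  interpret block_run_matching v r n M m L q
    by unfold_locales (use assms M \<open>0 < q\<close> \<open>L = q * m\<close> in auto)
  define \<delta> where "\<delta> t = bias (block m v t) - bias (block L v (t div q))" for t
  have div_m: "length v div m = T * q"
    using \<open>length v = T * L\<close> \<open>L = q * m\<close> assms(3) by simp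
  have "measure_pmf.variance (map_pmf (block m v) (pmf_of_set {..<length v div m})) bias
      = measure_pmf.variance (map_pmf (block L v) (pmf_of_set {..<T})) bias + (\<Sum>t<T * q. (\<delta> t)\<^sup>2) / (T * q)"
    unfolding div_m \<delta>_def \<open>L = q * m\<close>
    by (rule variance_refine_blocks) (use assms(3) \<open>0 < q\<close> \<open>0 < T\<close> \<open>length v = T * L\<close> \<open>L = q * m\<close> in auto)
  moreover have "\<epsilon> / 4 * (T * q) \<le> (\<Sum>t<T * q. \<bar>\<delta> t\<bar>)"
    using sum_bias_diff_lower_bound[OF assms(1,2,7,8) \<open>0 < length v\<close>] M assms(9)
    unfolding div_m \<delta>_def by simp
  then have "(\<epsilon> / 4)\<^sup>2 \<le> (\<Sum>t<T * q. (\<delta> t)\<^sup>2) / (T * q)"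
    using \<open>0 < q\<close> \<open>0 < T\<close> assms(1) by (intro mean_square_ge) simp_all
  moreover have "\<epsilon> ^ 3 / 1200 \<le> (\<epsilon> / 4)\<^sup>2"
    using assms(1,2) by (simp add: power2_eq_square power3_eq_cube)
  ultimately show ?thesis
    unfolding T_def by linarith
qed

theorem lemma3p3:
  shows "\<exists>\<epsilon>0>0. \<forall>(\<epsilon>::real) (n::nat) (v::bool list) (k::nat) (r::nat \<Rightarrow> nat) (l::nat \<Rightarrow> nat).
     0 < \<epsilon> \<and> \<epsilon> < \<epsilon>0 \<and> 0 < n
     \<and> (\<forall>j\<in>{1..k}. 0 < r j)
     \<and> (\<forall>j\<in>{1..<k}. r (Suc j) < r j \<and> real (r j) \<ge> real (r (Suc j)) / \<epsilon> ^ 4)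
     \<and> (\<forall>j\<in>{1..k}. real (l j) = \<epsilon>\<^sup>2 * real (r j))
     \<and> l 1 dvd length v
     \<and> (\<forall>j\<in>{1..<k}. l (Suc j) dvd l j)
     \<and> (\<forall>j\<in>{1..k}. adv v (A (r j) n) \<ge> \<epsilon> / 2)
     \<longrightarrow> (\<forall>i. 1 \<le> i \<and> i < k \<longrightarrow>
           measure_pmf.variance (vdist l v (Suc i)) bias
             \<ge> measure_pmf.variance (vdist l v i) bias + \<epsilon> ^ 3 / 1200)"
proof (rule exI[of _ "1/200"], intro conjI allI impI; (elim conjE)?)
  show "(0::real) < 1/200" by simp
next
  fix \<epsilon> :: real and n k i :: nat and v :: "bool list" and r l :: "nat \<Rightarrow> nat"
  assume "0 < \<epsilon>" "\<epsilon> < 1/200" and r_pos: "\<forall>j\<in>{1..k}. 0 < r j"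
    and r_dec: "\<forall>j\<in>{1..<k}. r (Suc j) < r j \<and> real (r j) \<ge> real (r (Suc j)) / \<epsilon> ^ 4"
    and l_r: "\<forall>j\<in>{1..k}. real (l j) = \<epsilon>\<^sup>2 * real (r j)" and dvd1: "l 1 dvd length v"
    and dvd: "\<forall>j\<in>{1..<k}. l (Suc j) dvd l j" and adv: "\<forall>j\<in>{1..k}. adv v (A (r j) n) \<ge> \<epsilon> / 2"
    and "1 \<le> i" "i < k"
  have l_pos: "\<forall>j\<in>{1..k}. 0 < l j"
    using r_pos l_r \<open>0 < \<epsilon>\<close> by (metis of_nat_0_less_iff mult_pos_pos zero_less_power)
  have "0 < length v"
    using adv \<open>1 \<le> i\<close> \<open>i < k\<close> \<open>0 < \<epsilon>\<close> adv_Nil by (cases v) auto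
  have "real (r (Suc i)) \<le> \<epsilon> ^ 4 * real (r i)"
    using r_dec \<open>1 \<le> i\<close> \<open>i < k\<close> \<open>0 < \<epsilon>\<close> by (simp add: divide_le_eq mult.commute)
  also have "\<dots> = \<epsilon>\<^sup>2 * real (l i)"
    using l_r \<open>1 \<le> i\<close> \<open>i < k\<close> by (simp add: power_add[symmetric])
  finally show "measure_pmf.variance (vdist l v (Suc i)) bias
      \<ge> measure_pmf.variance (vdist l v i) bias + \<epsilon> ^ 3 / 1200"
    using variance_gain[OF \<open>0 < \<epsilon>\<close> \<open>\<epsilon> < 1/200\<close>, of "l (Suc i)" "l i" v "r (Suc i)" n]
      vdist_uniform_block[OF l_pos dvd1 dvd, of i] vdist_uniform_block[OF l_pos dvd1 dvd, of "Suc i"]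
      vdist_dvd_length[OF dvd1 dvd, of i] l_pos r_pos l_r dvd adv \<open>1 \<le> i\<close> \<open>i < k\<close> \<open>0 < length v\<close>
    by simp
qed

end
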